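(* Let $M_1,M_2\in\mathbb{S}^n$ and let $$\mathcal{T}(\{M_1,M_2\})=\{X\in\mathbb{S}^n_+:\ \langle M_1,X\rangle=0,\ \langle M_2,X\rangle=0\}.$$ If $\mathcal{T}(\{M_1,M_2\})$ is rank-one generated, then one of the following holds: (i) there exists $(\alpha_1,\alpha_2)\neq(0,0)$ such that $\alpha_1M_1+\alpha_2M_2\in\mathbb{S}^n_+$, or (ii) there exist $a,b,c\in\mathbb{R}^n$ such that $M_1=\mathrm{Sym}(ac^\top)$ and $M_2=\mathrm{Sym}(bc^\top)$.
   Context: $\mathbb{S}^n$ is the space of real symmetric $n\times n$ matrices with inner product $\langle A,B\rangle=\mathrm{tr}(AB)$, and $\mathbb{S}^n_+$ the cone of positive semidefinite matrices. For $M\in\mathbb{R}^{n\times n}$, $\mathrm{Sym}(M)=(M+M^\top)/2$. A closed convex cone $\mathcal{S}\subseteq\mathbb{S}^n_+$ is called rank-one generated (ROG) if $\mathcal{S}=\mathrm{conv}(\mathcal{S}\cap\{xx^\top: x\in\mathbb{R}^n\})$. *)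

theory Defs
  imports "HOL-Analysis.Analysis"
begin

definition sym_mat :: "real^'n^'n \<Rightarrow> bool" where
  "sym_mat A \<longleftrightarrow> transpose A = A"

definition psd :: "real^'n^'n \<Rightarrow> bool" where
  "psd A \<longleftrightarrow> sym_mat A \<and> (\<forall>x. 0 \<le> x \<bullet> (A *v x))"

definition frob :: "real^'n^'n \<Rightarrow> real^'n^'n \<Rightarrow> real" where
  "frob A B = trace (A ** B)"

definition outer :: "real^'n \<Rightarrow> real^'n \<Rightarrow> real^'n^'n" where
  "outer a c = (\<chi> i j. a $ i * c $ j)"

definition Sym :: "real^'n^'n \<Rightarrow> real^'n^'n" where
  "Sym M = (1/2) *\<^sub>R (M + transpose M)"

definition rank_one_generated :: "(real^'n^'n) set \<Rightarrow> bool" where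
  "rank_one_generated S \<longleftrightarrow> S = convex hull (S \<inter> {outer x x | x. True})"

definition T2 :: "real^'n^'n \<Rightarrow> real^'n^'n \<Rightarrow> (real^'n^'n) set" where
  "T2 M1 M2 = {X. psd X \<and> frob M1 X = 0 \<and> frob M2 X = 0}"

end

theory Submission
  imports Defs
begin

(*
  Suppose no nontrivial combination of M1 and M2 is positive semidefinite. Then M1 is
  indefinite and, by Finsler's lemma, M2 takes both signs on the isotropic cone
  {x. x' M1 x = 0}. Rank-one generation of T makes isotropic vectors x, y of opposite
  M2-sign M1-orthogonal: otherwise |y' M2 y| x x' + |x' M2 x| y y' lies in T, although
  every rank-one matrix z z' in T with z in span {x, y} vanishes. Perturbation arguments
  turn this orthogonality into a factorization x' M1 x = (a' x) (m' x), and then show that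
  M2 is isotropic on one of the hyperplanes a' x = 0, m' x = 0. Finally, a symmetric matrix
  whose form vanishes on the hyperplane c' x = 0 is Sym (b c').
*)

definition quad_form :: "real^'n^'n \<Rightarrow> real^'n \<Rightarrow> real" where
  "quad_form M x = x \<bullet> (M *v x)"

definition bilin_form :: "real^'n^'n \<Rightarrow> real^'n \<Rightarrow> real^'n \<Rightarrow> real" where
  "bilin_form M x y = x \<bullet> (M *v y)"

definition indefinite :: "real^'n^'n \<Rightarrow> bool" where
  "indefinite M \<longleftrightarrow> (\<exists>u. 0 < quad_form M u) \<and> (\<exists>v. quad_form M v < 0)"

definition sign_orthogonal :: "real^'n^'n \<Rightarrow> real^'n^'n \<Rightarrow> bool" where
  "sign_orthogonal A B \<longleftrightarrow>
     (\<forall>x y. quad_form A x = 0 \<longrightarrow> quad_form A y = 0 \<longrightarrow>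
        quad_form B x * quad_form B y < 0 \<longrightarrow> bilin_form A x y = 0)"

lemma sign_orthogonalD:
  "sign_orthogonal A B \<Longrightarrow> quad_form A x = 0 \<Longrightarrow> quad_form A y = 0 \<Longrightarrow>
    quad_form B x * quad_form B y < 0 \<Longrightarrow> bilin_form A x y = 0"
  by (simp add: sign_orthogonal_def)

lemma psd_iff_quad_form: "psd M \<longleftrightarrow> sym_mat M \<and> (\<forall>x. 0 \<le> quad_form M x)"
  by (simp add: psd_def quad_form_def)

lemma quad_form_eq_bilin_form: "quad_form M x = bilin_form M x x"
  by (simp add: quad_form_def bilin_form_def)

lemma bilin_form_eq_inner_left: "sym_mat M \<Longrightarrow> bilin_form M x y = (M *v x) \<bullet> y"
  unfolding sym_mat_def bilin_form_def
  by (metis dot_lmul_matrix inner_commute transpose_matrix_vector)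

lemma bilin_form_commute: "sym_mat M \<Longrightarrow> bilin_form M x y = bilin_form M y x"
  using bilin_form_eq_inner_left[of M x y] by (simp add: bilin_form_def inner_commute)

lemma bilin_form_add_left [simp]: "bilin_form M (x + y) z = bilin_form M x z + bilin_form M y z"
  by (simp add: bilin_form_def inner_add_left)

lemma bilin_form_add_right [simp]: "bilin_form M x (y + z) = bilin_form M x y + bilin_form M x z"
  by (simp add: bilin_form_def matrix_vector_right_distrib inner_add_right)

lemma bilin_form_diff_left [simp]: "bilin_form M (x - y) z = bilin_form M x z - bilin_form M y z"
  by (simp add: bilin_form_def inner_diff_left)

lemma bilin_form_scaleR_left [simp]: "bilin_form M (c *\<^sub>R x) y = c * bilin_form M x y"
  by (simp add: bilin_form_def)

lemma bilin_form_scaleR_right [simp]: "bilin_form M x (c *\<^sub>R y) = c * bilin_form M x y"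
  by (simp add: bilin_form_def matrix_vector_mult_scaleR)

lemma quad_form_scaleR [simp]: "quad_form M (c *\<^sub>R x) = c\<^sup>2 * quad_form M x"
  by (simp add: quad_form_eq_bilin_form power2_eq_square)

lemma quad_form_add:
  "sym_mat M \<Longrightarrow> quad_form M (x + y) = quad_form M x + 2 * bilin_form M x y + quad_form M y"
  by (simp add: quad_form_eq_bilin_form bilin_form_commute[of M y x])

lemma quad_form_add_scaleR:
  "sym_mat M \<Longrightarrow>
    quad_form M (x + t *\<^sub>R y) = quad_form M x + 2 * bilin_form M x y * t + quad_form M y * t\<^sup>2"
  by (simp add: quad_form_add)

lemma quad_form_lincomb:
  "sym_mat M \<Longrightarrow> quad_form M (\<alpha> *\<^sub>R x + \<beta> *\<^sub>R y) =
    \<alpha>\<^sup>2 * quad_form M x + 2 * \<alpha> * \<beta> * bilin_form M x y + \<beta>\<^sup>2 * quad_form M y"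
  by (simp add: quad_form_add power2_eq_square)

lemma quad_form_matrix_add [simp]: "quad_form (A + B) x = quad_form A x + quad_form B x"
  by (simp add: quad_form_def matrix_vector_mult_add_rdistrib inner_add_right)

lemma quad_form_matrix_scaleR [simp]: "quad_form (c *\<^sub>R A) x = c * quad_form A x"
  by (simp add: quad_form_def scaleR_matrix_vector_assoc[symmetric])

lemma quad_form_matrix_uminus [simp]: "quad_form (- A) x = - quad_form A x"
  using quad_form_matrix_scaleR[of "- 1" A x] by simp

lemma quad_form_matrix_sum: "quad_form (\<Sum>i\<in>I. f i) x = (\<Sum>i\<in>I. quad_form (f i) x)"
  by (induction I rule: infinite_finite_induct)
    (auto simp: quad_form_def matrix_vector_mult_add_rdistrib inner_add_right)

lemma sym_mat_add: "sym_mat A \<Longrightarrow> sym_mat B \<Longrightarrow> sym_mat (A + B)"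
  by (simp add: sym_mat_def transpose_def vec_eq_iff)

lemma sym_mat_scaleR: "sym_mat A \<Longrightarrow> sym_mat (c *\<^sub>R A)"
  by (simp add: sym_mat_def transpose_def vec_eq_iff)

lemma sym_mat_eqI:
  assumes "sym_mat A" "sym_mat B" "\<And>x. quad_form A x = quad_form B x"
  shows "A = B"
proof -
  have "bilin_form A x y = bilin_form B x y" for x y
    using quad_form_add[OF assms(1), of x y] quad_form_add[OF assms(2), of x y] assms(3) by simp
  moreover have "M $ i $ j = bilin_form M (axis i 1) (axis j 1)" for M :: "real^'n^'n" and i j
    by (simp add: bilin_form_def matrix_vector_mult_basis inner_axis' column_def)
  ultimately show ?thesis
    by (metis vec_eq_iff)
qed

lemma continuous_quad_form [continuous_intros]:
  "continuous F f \<Longrightarrow> continuous F (\<lambda>t. quad_form M (f t))"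
  unfolding quad_form_def
  by (intro continuous_intros bounded_linear.continuous[OF matrix_vector_mul_bounded_linear])

lemma continuous_bilin_form [continuous_intros]:
  "continuous F f \<Longrightarrow> continuous F g \<Longrightarrow> continuous F (\<lambda>t. bilin_form M (f t) (g t))"
  unfolding bilin_form_def
  by (intro continuous_intros bounded_linear.continuous[OF matrix_vector_mul_bounded_linear])

lemma outer_0_left [simp]: "outer 0 c = 0"
  by (simp add: outer_def vec_eq_iff)

lemma sym_mat_outer_self: "sym_mat (outer x x)"
  by (simp add: sym_mat_def transpose_def outer_def vec_eq_iff mult.commute)

lemma sym_mat_Sym: "sym_mat (Sym M)"
  by (simp add: sym_mat_def Sym_def transpose_def vec_eq_iff add.commute)

lemma outer_mult_vector: "outer a c *v z = (c \<bullet> z) *\<^sub>R a"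
  by (simp add: outer_def matrix_vector_mult_def vec_eq_iff inner_vec_def sum_distrib_left mult_ac)

lemma quad_form_outer: "quad_form (outer a c) x = (a \<bullet> x) * (c \<bullet> x)"
  by (simp add: quad_form_def outer_mult_vector inner_commute)

lemma quad_form_transpose [simp]: "quad_form (transpose M) x = quad_form M x"
  by (simp add: quad_form_def transpose_matrix_vector inner_commute[of x] dot_lmul_matrix)

lemma quad_form_Sym [simp]: "quad_form (Sym M) x = quad_form M x"
  by (simp add: Sym_def)

lemma frob_outer_self: "frob M (outer x x) = quad_form M x"
  by (simp add: frob_def trace_def matrix_matrix_mult_def outer_def quad_form_def
      matrix_vector_mult_def inner_vec_def sum_distrib_left mult_ac)

lemma frob_lincomb: "frob M (a *\<^sub>R X + b *\<^sub>R Y) = a * frob M X + b * frob M Y"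
  by (simp add: frob_def trace_def matrix_matrix_mult_def sum_distrib_left sum.distrib algebra_simps)

lemma in_span_2_if_orthogonal:
  fixes x y z :: "'a::euclidean_space"
  assumes "\<And>w. x \<bullet> w = 0 \<Longrightarrow> y \<bullet> w = 0 \<Longrightarrow> z \<bullet> w = 0"
  obtains \<alpha> \<beta> where "z = \<alpha> *\<^sub>R x + \<beta> *\<^sub>R y"
proof -
  have "z \<in> (span {x, y})\<^sup>\<bottom>\<^sup>\<bottom>"
    using assms span_base[of x "{x, y}"] span_base[of y "{x, y}"]
    by (auto simp: orthogonal_comp_def orthogonal_def inner_commute)
  then have "z \<in> span {x, y}"
    by (simp add: orthogonal_comp_self)
  then show thesis
    using that by (auto simp: span_breakdown_eq span_singleton algebra_simps)
qed

lemma eq_0_if_orthogonal_off_hyperplane: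
  fixes a g :: "'a::real_inner"
  assumes "a \<noteq> 0" and "\<And>v. a \<bullet> v \<noteq> 0 \<Longrightarrow> g \<bullet> v = 0"
  shows "g = 0"
proof (cases "a \<bullet> g = 0")
  case True
  then have "g \<bullet> (g + a) = 0"
    using assms(1) assms(2)[of "g + a"] by (simp add: inner_add_right)
  with True show ?thesis
    by (simp add: inner_add_right inner_commute)
next
  case False
  then show ?thesis
    using assms(2)[of g] by simp
qed

lemma quadratic_roots_opposite_signs:
  fixes p b n :: real
  assumes p: "0 < p" and n: "n < 0"
  obtains t1 t2 where "t2 < 0" "0 < t1" "p + 2 * b * t1 + n * t1\<^sup>2 = 0"
    "p + 2 * b * t2 + n * t2\<^sup>2 = 0" "t1 * t2 = p / n"
proof -
  define s where "s = sqrt (b\<^sup>2 - p * n)"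
  have pn: "p * n < 0"
    using p n by (simp add: mult_pos_neg)
  then have disc: "0 \<le> b\<^sup>2 - p * n"
    using zero_le_power2[of b] by linarith
  then have s2: "s\<^sup>2 = b\<^sup>2 - p * n"
    by (simp add: s_def)
  have "\<bar>b\<bar>\<^sup>2 < s\<^sup>2"
    using pn s2 by simp
  then have "\<bar>b\<bar> < s"
    by (rule power2_less_imp_less) (use disc in \<open>simp add: s_def\<close>)
  have root: "p + 2 * b * t + n * t\<^sup>2 = 0" if "(n * t + b)\<^sup>2 = s\<^sup>2" for t
  proof -
    have "n * (p + 2 * b * t + n * t\<^sup>2) = (n * t + b)\<^sup>2 - (b\<^sup>2 - p * n)"
      by (simp add: algebra_simps power2_eq_square)
    with that s2 n show ?thesis
      by simp
  qed
  define t1 where "t1 = (- b - s) / n"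
  define t2 where "t2 = (- b + s) / n"
  have nt: "n * t1 = - b - s" "n * t2 = - b + s"
    using n by (simp_all add: t1_def t2_def)
  have "t2 < 0" "0 < t1"
    using \<open>\<bar>b\<bar> < s\<close> n by (auto simp: t1_def t2_def divide_neg_neg divide_pos_neg)
  moreover have "p + 2 * b * t1 + n * t1\<^sup>2 = 0" "p + 2 * b * t2 + n * t2\<^sup>2 = 0"
    by (rule root; simp add: nt)+
  moreover have "(n * t1) * (n * t2) = n * p"
    using s2 unfolding nt by (simp add: algebra_simps power2_eq_square)
  then have "t1 * t2 = p / n"
    using n by (simp add: field_simps)
  ultimately show thesis
    by (rule that)
qed

lemma quadratic_nonneg_at_opposite_points:
  fixes P C D t1 t2 :: real
  assumes "t2 < 0" "0 < t1" "0 \<le> P + 2 * C * t1 + D * t1\<^sup>2" "0 \<le> P + 2 * C * t2 + D * t2\<^sup>2"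
  shows "0 \<le> P - t1 * t2 * D"
proof -
  have "0 \<le> (- t2) * (P + 2 * C * t1 + D * t1\<^sup>2) + t1 * (P + 2 * C * t2 + D * t2\<^sup>2)"
    by (rule add_nonneg_nonneg; rule mult_nonneg_nonneg; use assms in linarith)
  also have "\<dots> = (t1 - t2) * (P - t1 * t2 * D)"
    by (simp add: algebra_simps power2_eq_square)
  finally show ?thesis
    using assms(1,2) by (simp add: zero_le_mult_iff)
qed

lemma mult_sign_trans:
  fixes u v r :: real
  assumes "0 < u * v" "0 \<le> v * r"
  shows "0 \<le> u * r"
  using assms by (auto simp: zero_less_mult_iff zero_le_mult_iff)

lemma affine_eventually_zero_imp_slope_zero:
  fixes a b :: real
  assumes "\<forall>\<^sub>F t in at 0. a + t * b = 0"
  shows "b = 0"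
proof -
  obtain d where d: "0 < d" "\<And>t. t \<noteq> 0 \<Longrightarrow> \<bar>t\<bar> < d \<Longrightarrow> a + t * b = 0"
    using assms by (auto simp: eventually_at dist_real_def)
  have "a + d / 2 * b = 0" "a + d / 4 * b = 0"
    by (rule d(2); use d(1) in simp)+
  then have "d * b = 0"
    by linarith
  with d(1) show ?thesis
    by simp
qed

section \<open>Finsler's lemma\<close>

lemma isotropic_nonneg_cross_inequality:
  assumes A: "sym_mat A" and B: "sym_mat B"
    and nonneg: "\<And>z. quad_form A z = 0 \<Longrightarrow> 0 \<le> quad_form B z"
    and x: "0 < quad_form A x" and y: "quad_form A y < 0"
  shows "quad_form B x * quad_form A y \<le> quad_form B y * quad_form A x"
proof -
  obtain t1 t2 where t: "t2 < 0" "0 < t1" "quad_form A (x + t1 *\<^sub>R y) = 0"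
    "quad_form A (x + t2 *\<^sub>R y) = 0" "t1 * t2 = quad_form A x / quad_form A y"
    using quadratic_roots_opposite_signs[OF x y, of "bilin_form A x y"]
    by (metis quad_form_add_scaleR[OF A])
  have "0 \<le> quad_form B x - t1 * t2 * quad_form B y"
    using quadratic_nonneg_at_opposite_points[OF t(1,2)] nonneg[OF t(3)] nonneg[OF t(4)]
    by (simp add: quad_form_add_scaleR[OF B])
  with y show ?thesis
    unfolding t(5) by (simp add: field_simps)
qed

lemma isotropic_nonneg_imp_psd_combination:
  assumes A: "sym_mat A" "indefinite A" and B: "sym_mat B"
    and nonneg: "\<And>z. quad_form A z = 0 \<Longrightarrow> 0 \<le> quad_form B z"
  shows "\<exists>l. psd (l *\<^sub>R A + B)"
proof -
  define S where "S = {- quad_form B x / quad_form A x | x. 0 < quad_form A x}"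
  obtain u v where u: "0 < quad_form A u" and v: "quad_form A v < 0"
    using A(2) by (auto simp: indefinite_def)
  have S_le: "s \<le> quad_form B y / (- quad_form A y)" if "s \<in> S" "quad_form A y < 0" for s y
    using that isotropic_nonneg_cross_inequality[OF A(1) B nonneg]
    by (fastforce simp: S_def field_simps)
  have "S \<noteq> {}"
    using u by (auto simp: S_def)
  have "bdd_above S"
    by (rule bdd_aboveI, rule S_le[OF _ v])
  have "0 \<le> Sup S * quad_form A x + quad_form B x" for x
  proof (cases "quad_form A x" "0 :: real" rule: linorder_cases)
    case less
    then have "Sup S \<le> quad_form B x / (- quad_form A x)"
      using \<open>S \<noteq> {}\<close> S_le by (intro cSup_least) auto
    with less show ?thesis
      by (simp add: field_simps)
  next
    case equal
    with nonneg show ?thesis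
      by simp
  next
    case greater
    then have "- quad_form B x / quad_form A x \<le> Sup S"
      using \<open>bdd_above S\<close> by (intro cSup_upper) (auto simp: S_def)
    with greater show ?thesis
      by (simp add: field_simps)
  qed
  then show ?thesis
    using A(1) B by (auto simp: psd_iff_quad_form intro: sym_mat_add sym_mat_scaleR)
qed

lemma indefinite_if_no_psd_combination:
  assumes M1: "sym_mat M1"
    and no_psd: "\<nexists>\<alpha>1 \<alpha>2. (\<alpha>1, \<alpha>2) \<noteq> (0, 0) \<and> psd (\<alpha>1 *\<^sub>R M1 + \<alpha>2 *\<^sub>R M2)"
  shows "indefinite M1"
proof -
  have "\<not> psd M1" "\<not> psd ((- 1) *\<^sub>R M1)"
    using no_psd[simplified, rule_format, of 1 0] no_psd[simplified, rule_format, of "- 1" 0] by auto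
  with M1 sym_mat_scaleR[OF M1, of "- 1"] show ?thesis
    by (auto simp: indefinite_def psd_iff_quad_form not_le)
qed

lemma isotropic_sign_change_if_no_psd_combination:
  assumes M1: "sym_mat M1" and M2: "sym_mat M2"
    and no_psd: "\<nexists>\<alpha>1 \<alpha>2. (\<alpha>1, \<alpha>2) \<noteq> (0, 0) \<and> psd (\<alpha>1 *\<^sub>R M1 + \<alpha>2 *\<^sub>R M2)"
  shows "\<exists>x. quad_form M1 x = 0 \<and> 0 < quad_form M2 x"
    and "\<exists>y. quad_form M1 y = 0 \<and> quad_form M2 y < 0"
proof -
  have indef: "indefinite M1"
    using indefinite_if_no_psd_combination[OF M1 no_psd] .
  have "\<exists>x. quad_form M1 x = 0 \<and> \<sigma> * quad_form M2 x < 0" if "\<sigma> \<noteq> 0" for \<sigma>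
  proof (rule ccontr)
    assume "\<not> ?thesis"
    then have "\<And>z. quad_form M1 z = 0 \<Longrightarrow> 0 \<le> quad_form (\<sigma> *\<^sub>R M2) z"
      by (auto simp: not_less)
    then obtain l where "psd (l *\<^sub>R M1 + \<sigma> *\<^sub>R M2)"
      using isotropic_nonneg_imp_psd_combination[OF M1 indef sym_mat_scaleR[OF M2]] by blast
    with no_psd that show False
      by auto
  qed
  from this[of "- 1"] this[of 1]
  show "\<exists>x. quad_form M1 x = 0 \<and> 0 < quad_form M2 x" "\<exists>y. quad_form M1 y = 0 \<and> quad_form M2 y < 0"
    by auto
qed

section \<open>Consequences of rank-one generation\<close>

lemma common_isotropic_in_span_eq_0:
  assumes A: "sym_mat A" and B: "sym_mat B"
    and x: "quad_form A x = 0" and y: "quad_form A y = 0" and b: "bilin_form A x y \<noteq> 0"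
    and opposite: "quad_form B x * quad_form B y < 0"
    and z: "quad_form A (\<alpha> *\<^sub>R x + \<beta> *\<^sub>R y) = 0" "quad_form B (\<alpha> *\<^sub>R x + \<beta> *\<^sub>R y) = 0"
  shows "\<alpha> = 0 \<and> \<beta> = 0"
proof -
  have "\<alpha> * \<beta> = 0"
    using z(1) x y b by (simp add: quad_form_lincomb[OF A])
  moreover have "\<alpha>\<^sup>2 * quad_form B x + \<beta>\<^sup>2 * quad_form B y = 0"
    using z(2) calculation by (auto simp: quad_form_lincomb[OF B])
  ultimately show ?thesis
    using opposite by auto
qed

lemma quad_form_sum_outer_eq_0_imp_orthogonal:
  assumes F: "finite F" "\<And>W. W \<in> F \<Longrightarrow> 0 \<le> c W" "\<And>W. W \<in> F \<Longrightarrow> \<exists>z. W = outer z z"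
    and w: "quad_form (\<Sum>W\<in>F. c W *\<^sub>R W) w = 0"
    and z: "outer z z \<in> F" "0 < c (outer z z)"
  shows "z \<bullet> w = 0"
proof -
  have "0 \<le> c W * quad_form W w" if "W \<in> F" for W
    using F(2,3)[OF that] by (auto simp: quad_form_outer)
  with F(1) w have "c W * quad_form W w = 0" if "W \<in> F" for W
    using that by (simp add: quad_form_matrix_sum sum_nonneg_eq_0_iff)
  from this[OF z(1)] z(2) show ?thesis
    by (simp add: quad_form_outer)
qed

lemma convex_hull_outer_eq_0:
  assumes Y: "Y \<in> convex hull (S \<inter> {outer z z | z. True})"
    and gen_0: "\<And>z. outer z z \<in> S \<Longrightarrow> (\<And>w. quad_form Y w = 0 \<Longrightarrow> z \<bullet> w = 0) \<Longrightarrow> z = 0"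
  shows "Y = 0"
proof -
  obtain F c where F: "finite F" "F \<subseteq> S \<inter> {outer z z | z. True}"
    "\<forall>W\<in>F. 0 \<le> c W" "(\<Sum>W\<in>F. c W *\<^sub>R W) = Y"
    using Y unfolding convex_hull_explicit by blast
  have c: "\<And>W. W \<in> F \<Longrightarrow> 0 \<le> c W" and gen: "\<And>W. W \<in> F \<Longrightarrow> \<exists>z. W = outer z z"
    using F(2,3) by blast+
  have "c W *\<^sub>R W = 0" if W: "W \<in> F" for W
  proof (cases "c W = 0")
    case False
    obtain z where z: "W = outer z z"
      using gen[OF W] by blast
    have zF: "outer z z \<in> F" and cz: "0 < c (outer z z)"
      using W c[OF W] False by (simp_all add: z)
    have "z \<bullet> w = 0" if "quad_form Y w = 0" for w
      using quad_form_sum_outer_eq_0_imp_orthogonal[of F c w z, OF F(1) c gen _ zF cz] that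
      by (simp add: F(4))
    with F(2) zF have "z = 0"
      by (intro gen_0) auto
    then show ?thesis
      by (simp add: z)
  qed simp
  then show ?thesis
    unfolding F(4)[symmetric] by (intro sum.neutral ballI)
qed

lemma outer_pair_in_T2:
  assumes x: "quad_form M1 x = 0" and y: "quad_form M1 y = 0"
    and opposite: "quad_form M2 x * quad_form M2 y < 0"
  shows "\<bar>quad_form M2 y\<bar> *\<^sub>R outer x x + \<bar>quad_form M2 x\<bar> *\<^sub>R outer y y \<in> T2 M1 M2"
    (is "?Y \<in> _")
proof -
  have "sym_mat ?Y"
    by (intro sym_mat_add sym_mat_scaleR sym_mat_outer_self)
  then have "psd ?Y"
    by (simp add: psd_iff_quad_form quad_form_outer)
  moreover have "frob M1 ?Y = 0"
    unfolding frob_lincomb frob_outer_self using x y by simp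
  moreover have "frob M2 ?Y = 0"
    unfolding frob_lincomb frob_outer_self using opposite by (auto simp: mult_less_0_iff)
  ultimately show ?thesis
    by (simp add: T2_def)
qed

lemma rank_one_generated_imp_sign_orthogonal:
  assumes M1: "sym_mat M1" and M2: "sym_mat M2" and rog: "rank_one_generated (T2 M1 M2)"
  shows "sign_orthogonal M1 M2"
  unfolding sign_orthogonal_def
proof (intro allI impI)
  fix x y
  assume x: "quad_form M1 x = 0" and y: "quad_form M1 y = 0"
    and opposite: "quad_form M2 x * quad_form M2 y < 0"
  define Y where "Y = \<bar>quad_form M2 y\<bar> *\<^sub>R outer x x + \<bar>quad_form M2 x\<bar> *\<^sub>R outer y y"
  have qY: "quad_form Y w = \<bar>quad_form M2 y\<bar> * (x \<bullet> w)\<^sup>2 + \<bar>quad_form M2 x\<bar> * (y \<bullet> w)\<^sup>2" for w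
    by (simp add: Y_def quad_form_outer power2_eq_square)
  show "bilin_form M1 x y = 0"
  proof (rule ccontr)
    assume b: "bilin_form M1 x y \<noteq> 0"
    have "Y \<in> T2 M1 M2"
      unfolding Y_def using x y opposite by (rule outer_pair_in_T2)
    with rog have "Y \<in> convex hull (T2 M1 M2 \<inter> {outer z z | z. True})"
      unfolding rank_one_generated_def by (rule subst[where P = "\<lambda>S. Y \<in> S"])
    then have "Y = 0"
    proof (rule convex_hull_outer_eq_0)
      fix z
      assume z: "outer z z \<in> T2 M1 M2" and ker: "\<And>w. quad_form Y w = 0 \<Longrightarrow> z \<bullet> w = 0"
      have "z \<bullet> w = 0" if "x \<bullet> w = 0" "y \<bullet> w = 0" for w
        using ker that by (simp add: qY)
      then obtain \<alpha> \<beta> where \<alpha>\<beta>: "z = \<alpha> *\<^sub>R x + \<beta> *\<^sub>R y"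
        by (rule in_span_2_if_orthogonal)
      have "quad_form M1 z = 0" "quad_form M2 z = 0"
        using z by (simp_all add: T2_def frob_outer_self)
      then have "\<alpha> = 0 \<and> \<beta> = 0"
        unfolding \<alpha>\<beta> by (rule common_isotropic_in_span_eq_0[OF M1 M2 x y b opposite])
      with \<alpha>\<beta> show "z = 0"
        by simp
    qed
    moreover have "x \<noteq> 0" "quad_form M2 y \<noteq> 0"
      using opposite by (auto simp: quad_form_def)
    then have "0 < quad_form Y x"
      unfolding qY by (simp add: add_pos_nonneg)
    ultimately show False
      by (simp add: quad_form_def)
  qed
qed

section \<open>Factorization of the first form\<close>

lemma eventually_quad_form_same_sign:
  assumes "quad_form B z \<noteq> 0"
  shows "\<forall>\<^sub>F t in at 0. 0 < quad_form B z * quad_form B (z + t *\<^sub>R v)"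
proof -
  have "isCont (\<lambda>t. quad_form B z * quad_form B (z + t *\<^sub>R v)) 0"
    by (intro continuous_intros)
  then have "((\<lambda>t. quad_form B z * quad_form B (z + t *\<^sub>R v)) \<longlongrightarrow> quad_form B z * quad_form B z) (at 0)"
    by (simp add: isCont_def)
  then show ?thesis
    by (rule order_tendstoD) (use assms in \<open>metis not_real_square_gt_zero\<close>)
qed

lemma quad_form_same_sign_shift:
  assumes "quad_form B z \<noteq> 0"
  obtains t where "t \<noteq> 0" "0 < quad_form B z * quad_form B (z + t *\<^sub>R v)"
  using eventually_happens'[OF at_neq_bot
      eventually_conj[OF eventually_neq_at_within eventually_quad_form_same_sign[OF assms]]] that
  by blast

lemma quad_form_same_sign_off_hyperplane:
  assumes "quad_form B z \<noteq> 0" "e \<bullet> v \<noteq> 0"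
  obtains t where "0 < quad_form B z * quad_form B (z + t *\<^sub>R v)" "e \<bullet> (z + t *\<^sub>R v) \<noteq> 0"
proof (cases "e \<bullet> z = 0")
  case True
  obtain t where "t \<noteq> 0" "0 < quad_form B z * quad_form B (z + t *\<^sub>R v)"
    using quad_form_same_sign_shift[OF assms(1)] by blast
  with True assms(2) show thesis
    by (intro that[of t]) (auto simp: inner_add_right)
next
  case False
  with assms(1) show thesis
    by (intro that[of 0]) (simp_all, metis not_real_square_gt_zero)
qed

lemma indefinite_imp_isotropic_not_in_kernel:
  assumes A: "sym_mat A" "indefinite A"
  obtains w where "quad_form A w = 0" "A *v w \<noteq> 0"
proof (rule ccontr)
  assume kernel: "\<not> thesis"
  obtain u v where u: "0 < quad_form A u" and v: "quad_form A v < 0"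
    using A(2) by (auto simp: indefinite_def)
  obtain t1 t2 where t: "t2 < 0" "0 < t1"
    "quad_form A (u + t1 *\<^sub>R v) = 0" "quad_form A (u + t2 *\<^sub>R v) = 0"
    using quadratic_roots_opposite_signs[OF u v, of "bilin_form A u v"]
    by (metis quad_form_add_scaleR[OF A(1)])
  then have "A *v (u + t1 *\<^sub>R v) = 0" "A *v (u + t2 *\<^sub>R v) = 0"
    using kernel that by blast+
  moreover have "(t1 - t2) *\<^sub>R (A *v v) = A *v (u + t1 *\<^sub>R v) - A *v (u + t2 *\<^sub>R v)"
    by (simp add: matrix_vector_right_distrib matrix_vector_mult_scaleR algebra_simps)
  ultimately have "(t1 - t2) *\<^sub>R (A *v v) = 0"
    by simp
  with t(1,2) have "A *v v = 0"
    by simp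
  with v show False
    by (simp add: quad_form_def)
qed

lemma isotropic_same_sign_not_in_kernel:
  assumes A: "sym_mat A" "indefinite A"
    and x0: "quad_form A x0 = 0" "quad_form B x0 \<noteq> 0"
  obtains x where "quad_form A x = 0" "0 < quad_form B x0 * quad_form B x" "A *v x \<noteq> 0"
proof (cases "A *v x0 = 0")
  case False
  with x0 show thesis
    by (intro that[of x0]) (simp_all, metis not_real_square_gt_zero)
next
  case True
  obtain w where w: "quad_form A w = 0" "A *v w \<noteq> 0"
    using indefinite_imp_isotropic_not_in_kernel[OF A] .
  obtain t where t: "t \<noteq> 0" "0 < quad_form B x0 * quad_form B (x0 + t *\<^sub>R w)"
    using quad_form_same_sign_shift[OF x0(2)] .
  have "bilin_form A x0 w = 0"
    using True by (simp add: bilin_form_eq_inner_left[OF A(1)])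
  then have "quad_form A (x0 + t *\<^sub>R w) = 0"
    by (simp add: quad_form_add_scaleR[OF A(1)] x0 w)
  moreover note t(2)
  moreover have "A *v (x0 + t *\<^sub>R w) \<noteq> 0"
    using True t(1) w(2) by (simp add: matrix_vector_right_distrib matrix_vector_mult_scaleR)
  ultimately show thesis
    by (rule that)
qed

text \<open>Up to the factor \<open>quad_form A w\<close>, this is the second point in which the line through
  \<open>x\<close> in direction \<open>w\<close> meets the isotropic cone of \<open>A\<close>.\<close>

lemma isotropic_second_point:
  assumes "sym_mat A" "quad_form A x = 0"
  shows "quad_form A (quad_form A w *\<^sub>R x - (2 * bilin_form A x w) *\<^sub>R w) = 0"
  using quad_form_lincomb[OF assms(1), of "quad_form A w" x "- 2 * bilin_form A x w" w] assms(2)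
  by (simp add: power2_eq_square algebra_simps)

lemma sign_orthogonal_bilin_form_off_hyperplane:
  assumes A: "sym_mat A" and orth: "sign_orthogonal A B"
    and x: "quad_form A x = 0" "0 < quad_form B x"
    and y: "quad_form A y = 0" "quad_form B y < 0"
    and w: "(A *v x) \<bullet> w = 0" "quad_form A w \<noteq> 0"
    and v: "(A *v x) \<bullet> v \<noteq> 0"
  shows "bilin_form A v y = 0"
proof -
  have neg: "quad_form B x' * quad_form B y < 0" if "0 < quad_form B x'" for x'
    using that y(2) by (simp add: mult_pos_neg)
  have xy: "bilin_form A x y = 0"
    using sign_orthogonalD[OF orth x(1) y(1) neg[OF x(2)]] .
  \<comment> \<open>For small \<open>e\<close>, \<open>x' e\<close> is isotropic with positive \<open>B\<close>-value,
    hence \<open>A\<close>-orthogonal to \<open>y\<close>.\<close>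
  define u where "u e = w + e *\<^sub>R v" for e
  define x' where "x' e = quad_form A (u e) *\<^sub>R x - (2 * bilin_form A x (u e)) *\<^sub>R u e" for e
  have xu: "bilin_form A x (u e) = e * ((A *v x) \<bullet> v)" for e
    using w(1) by (simp add: u_def bilin_form_eq_inner_left[OF A] inner_add_right)
  have "isCont (\<lambda>e. quad_form B (x' e)) 0"
    unfolding x'_def u_def by (intro continuous_intros)
  moreover have "x' 0 = quad_form A w *\<^sub>R x"
    unfolding x'_def xu by (simp add: u_def)
  with w(2) x(2) have "0 < quad_form B (x' 0)"
    by simp
  ultimately have "\<forall>\<^sub>F e in at 0. 0 < quad_form B (x' e)"
    by (simp add: isCont_def order_tendstoD(1))
  then have "\<forall>\<^sub>F e in at 0. 0 < quad_form B (x' e) \<and> e \<noteq> 0"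
    by (intro eventually_conj eventually_neq_at_within)
  moreover have "bilin_form A w y + e * bilin_form A v y = 0"
    if "0 < quad_form B (x' e) \<and> e \<noteq> 0" for e
  proof -
    have "quad_form A (x' e) = 0"
      unfolding x'_def by (rule isotropic_second_point[OF A x(1)])
    then have "bilin_form A (x' e) y = 0"
      using sign_orthogonalD[OF orth _ y(1) neg] that by blast
    moreover have "bilin_form A (x' e) y
        = - 2 * (e * ((A *v x) \<bullet> v)) * (bilin_form A w y + e * bilin_form A v y)"
      unfolding x'_def xu by (simp add: u_def xy algebra_simps)
    ultimately show ?thesis
      using v that by simp
  qed
  ultimately have "\<forall>\<^sub>F e in at 0. bilin_form A w y + e * bilin_form A v y = 0"
    by (rule eventually_mono)
  then show ?thesis
    by (rule affine_eventually_zero_imp_slope_zero)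
qed

lemma sign_orthogonal_isotropic_hyperplane:
  assumes A: "sym_mat A" and orth: "sign_orthogonal A B"
    and x: "quad_form A x = 0" "0 < quad_form B x" "A *v x \<noteq> 0"
    and y: "quad_form A y = 0" "quad_form B y < 0" "A *v y \<noteq> 0"
    and w: "(A *v x) \<bullet> w = 0"
  shows "quad_form A w = 0"
proof (rule ccontr)
  assume "quad_form A w \<noteq> 0"
  then have "v \<bullet> (A *v y) = 0" if "(A *v x) \<bullet> v \<noteq> 0" for v
    using sign_orthogonal_bilin_form_off_hyperplane[OF A orth x(1,2) y(1,2) w _ that]
    by (simp add: bilin_form_def)
  then have "A *v y = 0"
    by (intro eq_0_if_orthogonal_off_hyperplane[OF x(3)]) (simp add: inner_commute)
  with y(3) show False
    by contradiction
qed

lemma hyperplane_isotropic_imp_factorization: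
  assumes M: "sym_mat M" and a: "a \<noteq> 0" and iso: "\<And>w. a \<bullet> w = 0 \<Longrightarrow> quad_form M w = 0"
  obtains m where "\<And>w. quad_form M w = (a \<bullet> w) * (m \<bullet> w)"
proof
  fix w
  define k where "k = (a \<bullet> w) / (a \<bullet> a)"
  define p where "p = w - k *\<^sub>R a"
  have "a \<bullet> p = 0"
    using a by (simp add: p_def k_def inner_diff_right)
  then have "quad_form M p = 0"
    by (rule iso)
  have bpa: "bilin_form M p a = (M *v a) \<bullet> w - k * quad_form M a"
    by (simp add: p_def bilin_form_def quad_form_def inner_diff_left inner_diff_right inner_commute)
  have "quad_form M w = quad_form M (p + k *\<^sub>R a)"
    by (simp add: p_def)
  also have "\<dots> = 2 * k * ((M *v a) \<bullet> w) - k\<^sup>2 * quad_form M a"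
    using \<open>quad_form M p = 0\<close>
    by (simp add: quad_form_add_scaleR[OF M] bpa algebra_simps power2_eq_square)
  also have "\<dots> = (a \<bullet> w) * (((2 / (a \<bullet> a)) *\<^sub>R (M *v a)
      - (quad_form M a / (a \<bullet> a)\<^sup>2) *\<^sub>R a) \<bullet> w)"
    using a by (simp add: k_def inner_diff_left inner_diff_right inner_commute field_simps power2_eq_square)
  finally show "quad_form M w = (a \<bullet> w) * (((2 / (a \<bullet> a)) *\<^sub>R (M *v a)
      - (quad_form M a / (a \<bullet> a)\<^sup>2) *\<^sub>R a) \<bullet> w)" .
qed

lemma hyperplane_isotropic_imp_Sym_outer:
  assumes M: "sym_mat M" and c: "c \<noteq> 0" and iso: "\<And>w. c \<bullet> w = 0 \<Longrightarrow> quad_form M w = 0"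
  shows "\<exists>a. M = Sym (outer a c)"
proof -
  obtain a where a: "\<And>w. quad_form M w = (c \<bullet> w) * (a \<bullet> w)"
    using hyperplane_isotropic_imp_factorization[OF M c iso] by blast
  have "M = Sym (outer a c)"
    by (rule sym_mat_eqI[OF M sym_mat_Sym]) (simp add: a quad_form_outer)
  then show ?thesis ..
qed

lemma sign_orthogonal_imp_factorization:
  assumes A: "sym_mat A" "indefinite A" and orth: "sign_orthogonal A B"
    and p: "quad_form A p = 0" "0 < quad_form B p"
    and q: "quad_form A q = 0" "quad_form B q < 0"
  obtains a m where "\<And>w. quad_form A w = (a \<bullet> w) * (m \<bullet> w)"
proof -
  obtain x where x: "quad_form A x = 0" "0 < quad_form B p * quad_form B x" "A *v x \<noteq> 0"
    using isotropic_same_sign_not_in_kernel[OF A p(1)] p(2) by (metis less_irrefl)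
  obtain y where y: "quad_form A y = 0" "0 < quad_form B q * quad_form B y" "A *v y \<noteq> 0"
    using isotropic_same_sign_not_in_kernel[OF A q(1)] q(2) by (metis less_irrefl)
  have "0 < quad_form B x" "quad_form B y < 0"
    using p(2) x(2) q(2) y(2) by (simp_all add: zero_less_mult_iff)
  then have "quad_form A w = 0" if "(A *v x) \<bullet> w = 0" for w
    using sign_orthogonal_isotropic_hyperplane[OF A(1) orth x(1) _ x(3) y(1) _ y(3) that] by blast
  then show thesis
    using hyperplane_isotropic_imp_factorization[OF A(1) x(3)] that by blast
qed

section \<open>A common isotropic hyperplane\<close>

lemma indefinite_factorization_hyperplanes_differ:
  assumes indef: "indefinite A" and factor: "\<And>w. quad_form A w = (a \<bullet> w) * (m \<bullet> w)"
  obtains x where "a \<bullet> x = 0" "m \<bullet> x \<noteq> 0"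
proof -
  have "\<not> (\<forall>w. a \<bullet> w = 0 \<longrightarrow> m \<bullet> w = 0)"
  proof
    assume "\<forall>w. a \<bullet> w = 0 \<longrightarrow> m \<bullet> w = 0"
    then obtain \<alpha> \<beta> where "m = \<alpha> *\<^sub>R a + \<beta> *\<^sub>R a"
      using in_span_2_if_orthogonal[of a a m] by blast
    then have "quad_form A w = (\<alpha> + \<beta>) * (a \<bullet> w)\<^sup>2" for w
      by (simp add: factor inner_add_left algebra_simps power2_eq_square)
    with indef show False
      by (auto simp: indefinite_def zero_less_mult_iff mult_less_0_iff)
  qed
  with that show thesis
    by blast
qed

lemma factorization_cross_sign:
  assumes A: "sym_mat A" and factor: "\<And>w. quad_form A w = (a \<bullet> w) * (m \<bullet> w)"
    and orth: "sign_orthogonal A B"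
    and x: "a \<bullet> x = 0" "m \<bullet> x \<noteq> 0" and y: "m \<bullet> y = 0" "a \<bullet> y \<noteq> 0"
  shows "0 \<le> quad_form B x * quad_form B y"
proof (rule ccontr)
  assume "\<not> ?thesis"
  then have "bilin_form A x y = 0"
    using x(1) y(1) by (intro sign_orthogonalD[OF orth]) (simp_all add: factor)
  moreover have "2 * bilin_form A x y = (a \<bullet> y) * (m \<bullet> x)"
    using quad_form_add[OF A, of x y] x(1) y(1) by (simp add: factor inner_add_right)
  ultimately show False
    using x(2) y(2) by simp
qed

lemma quad_form_nonzero_off_hyperplane:
  assumes z: "a \<bullet> z = 0" "quad_form B z \<noteq> 0" and x0: "a \<bullet> x0 = 0" "m \<bullet> x0 \<noteq> 0"
  obtains x where "a \<bullet> x = 0" "m \<bullet> x \<noteq> 0" "quad_form B x \<noteq> 0"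
proof -
  obtain t where "0 < quad_form B z * quad_form B (z + t *\<^sub>R x0)" "m \<bullet> (z + t *\<^sub>R x0) \<noteq> 0"
    using quad_form_same_sign_off_hyperplane[OF z(2) x0(2)] .
  with z(1) x0(1) show thesis
    by (intro that[of "z + t *\<^sub>R x0"]) (auto simp: inner_add_right)
qed

lemma sign_extends_to_hyperplane:
  assumes nonneg: "\<And>z. a \<bullet> z = 0 \<Longrightarrow> m \<bullet> z \<noteq> 0 \<Longrightarrow> 0 \<le> quad_form B z * r"
    and x0: "a \<bullet> x0 = 0" "m \<bullet> x0 \<noteq> 0" and z: "a \<bullet> z = 0"
  shows "0 \<le> quad_form B z * r"
proof (cases "quad_form B z = 0")
  case False
  obtain t where t: "0 < quad_form B z * quad_form B (z + t *\<^sub>R x0)" "m \<bullet> (z + t *\<^sub>R x0) \<noteq> 0"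
    using quad_form_same_sign_off_hyperplane[OF False x0(2)] .
  have "0 \<le> quad_form B (z + t *\<^sub>R x0) * r"
    using nonneg t(2) z x0(1) by (simp add: inner_add_right)
  with t(1) show ?thesis
    by (rule mult_sign_trans)
qed simp

lemma sign_orthogonal_constant_sign_on_isotropic_cone:
  assumes A: "sym_mat A" and factor: "\<And>w. quad_form A w = (a \<bullet> w) * (m \<bullet> w)"
    and orth: "sign_orthogonal A B"
    and x: "a \<bullet> x = 0" "m \<bullet> x \<noteq> 0" "quad_form B x \<noteq> 0"
    and y: "m \<bullet> y = 0" "a \<bullet> y \<noteq> 0" "quad_form B y \<noteq> 0"
    and z: "quad_form A z = 0"
  shows "0 \<le> quad_form B z * quad_form B y"
proof -
  have cross: "0 \<le> quad_form B u * quad_form B v"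
    if "a \<bullet> u = 0" "m \<bullet> u \<noteq> 0" "m \<bullet> v = 0" "a \<bullet> v \<noteq> 0" for u v
    using factorization_cross_sign[OF A factor orth that] .
  show ?thesis
  proof (cases "a \<bullet> z = 0")
    case True
    show ?thesis
      by (rule sign_extends_to_hyperplane[OF _ x(1,2) True]) (rule cross[OF _ _ y(1,2)])
  next
    case False
    with z have "m \<bullet> z = 0"
      by (simp add: factor)
    have "0 \<le> quad_form B z * quad_form B x"
      by (rule sign_extends_to_hyperplane[OF _ y(1,2) \<open>m \<bullet> z = 0\<close>])
        (use cross[OF x(1,2)] in \<open>simp add: mult.commute\<close>)
    moreover have "0 < quad_form B x * quad_form B y"
      by (rule order_le_neq_trans[OF cross[OF x(1,2) y(1,2)]]) (use x(3) y(3) in simp)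
    ultimately show ?thesis
      by (auto simp: zero_le_mult_iff zero_less_mult_iff)
  qed
qed

lemma sign_orthogonal_common_isotropic_hyperplane:
  assumes A: "sym_mat A" "indefinite A" and factor: "\<And>w. quad_form A w = (a \<bullet> w) * (m \<bullet> w)"
    and orth: "sign_orthogonal A B"
    and p: "quad_form A p = 0" "0 < quad_form B p" and q: "quad_form A q = 0" "quad_form B q < 0"
  obtains c where "c \<noteq> 0" "\<And>w. c \<bullet> w = 0 \<Longrightarrow> quad_form A w = 0"
    "\<And>w. c \<bullet> w = 0 \<Longrightarrow> quad_form B w = 0"
proof (rule ccontr)
  note common_hyperplane = that
  assume no_common: "\<not> thesis"
  have factor': "\<And>w. quad_form A w = (m \<bullet> w) * (a \<bullet> w)"
    by (simp add: factor mult.commute)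
  obtain x0 where x0: "a \<bullet> x0 = 0" "m \<bullet> x0 \<noteq> 0"
    using indefinite_factorization_hyperplanes_differ[OF A(2) factor] .
  obtain y0 where y0: "m \<bullet> y0 = 0" "a \<bullet> y0 \<noteq> 0"
    using indefinite_factorization_hyperplanes_differ[OF A(2) factor'] .
  have "a \<noteq> 0" "m \<noteq> 0"
    using x0(2) y0(2) by auto
  have B_nonvanishing: "\<not> (\<forall>w. c \<bullet> w = 0 \<longrightarrow> quad_form B w = 0)" if "c = a \<or> c = m" for c
  proof
    assume "\<forall>w. c \<bullet> w = 0 \<longrightarrow> quad_form B w = 0"
    with \<open>a \<noteq> 0\<close> \<open>m \<noteq> 0\<close> \<open>c = a \<or> c = m\<close> have thesis
      by (intro common_hyperplane[of c]) (auto simp: factor)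
    with no_common show False ..
  qed
  obtain x1 where x1: "a \<bullet> x1 = 0" "quad_form B x1 \<noteq> 0"
    using B_nonvanishing[of a] by blast
  obtain y1 where y1: "m \<bullet> y1 = 0" "quad_form B y1 \<noteq> 0"
    using B_nonvanishing[of m] by blast
  obtain x where x: "a \<bullet> x = 0" "m \<bullet> x \<noteq> 0" "quad_form B x \<noteq> 0"
    using quad_form_nonzero_off_hyperplane[OF x1 x0] .
  obtain y where y: "m \<bullet> y = 0" "a \<bullet> y \<noteq> 0" "quad_form B y \<noteq> 0"
    using quad_form_nonzero_off_hyperplane[OF y1 y0] .
  have "0 \<le> quad_form B p * quad_form B y" "0 \<le> quad_form B q * quad_form B y"
    using sign_orthogonal_constant_sign_on_isotropic_cone[OF A(1) factor orth x y] p(1) q(1)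
    by blast+
  with p(2) q(2) y(3) show False
    by (simp add: zero_le_mult_iff)
qed

theorem theorem4p2:
  fixes M1 M2 :: "real^'n^'n"
  assumes "sym_mat M1" and "sym_mat M2"
    and "rank_one_generated (T2 M1 M2)"
  shows "(\<exists>\<alpha>1 \<alpha>2. (\<alpha>1, \<alpha>2) \<noteq> (0, 0) \<and> psd (\<alpha>1 *\<^sub>R M1 + \<alpha>2 *\<^sub>R M2))
       \<or> (\<exists>a b c :: real^'n. M1 = Sym (outer a c) \<and> M2 = Sym (outer b c))"
proof -
  have "\<exists>a b c :: real^'n. M1 = Sym (outer a c) \<and> M2 = Sym (outer b c)"
    if no_psd: "\<nexists>\<alpha>1 \<alpha>2. (\<alpha>1, \<alpha>2) \<noteq> (0, 0) \<and> psd (\<alpha>1 *\<^sub>R M1 + \<alpha>2 *\<^sub>R M2)"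
  proof -
    have indef: "indefinite M1"
      using indefinite_if_no_psd_combination[OF assms(1) no_psd] .
    obtain p q where p: "quad_form M1 p = 0" "0 < quad_form M2 p"
      and q: "quad_form M1 q = 0" "quad_form M2 q < 0"
      using isotropic_sign_change_if_no_psd_combination[OF assms(1,2) no_psd] by blast
    have orth: "sign_orthogonal M1 M2"
      using rank_one_generated_imp_sign_orthogonal[OF assms] .
    obtain a m where factor: "\<And>w. quad_form M1 w = (a \<bullet> w) * (m \<bullet> w)"
      using sign_orthogonal_imp_factorization[OF assms(1) indef orth p q] by blast
    obtain c where "c \<noteq> 0" "\<And>w. c \<bullet> w = 0 \<Longrightarrow> quad_form M1 w = 0"
      "\<And>w. c \<bullet> w = 0 \<Longrightarrow> quad_form M2 w = 0"
      using sign_orthogonal_common_isotropic_hyperplane[OF assms(1) indef factor orth p q] by blast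
    then show ?thesis
      using hyperplane_isotropic_imp_Sym_outer[OF assms(1)] hyperplane_isotropic_imp_Sym_outer[OF assms(2)]
      by blast
  qed
  then show ?thesis
    by blast
qed

end
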